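(* Let $f_E$ be the solution of the discrete wave equation in the cone $|j|+|k|<n$ with boundary conditions $(0;1,0,0,0)$. Then for all $(j,k,n)\in\Lambda^+$ with $n\ge 1$, $$f_E(j,k,n)=\frac12\sum_{s=1}^{n-1}f_0(j-s,k,n-s).$$
   Context: Let $\Lambda^+=\{(j,k,n)\in\mathbb Z^2\times\mathbb Z_{\ge0}: j+k+n\text{ odd}\}$. The fundamental solution $f_0:\Lambda^+\to\mathbb R$ is defined by: $f_0(j,k,0)=0$ for all $j,k$; $f_0(0,0,1)=1$ and $f_0(j,k,1)=0$ for all other $(j,k)$; and for all $(j,k,n+1)\in\Lambda^+$ with $n\ge1$, $f_0(j,k,n+1)+f_0(j,k,n-1)=\tfrac12\big(f_0(j+1,k,n)+f_0(j-1,k,n)+f_0(j,k+1,n)+f_0(j,k-1,n)\big)$ (the discrete wave equation). Given $b_0,b_E,b_N,b_W,b_S\in\mathbb C$, $f:\Lambda^+\to\mathbb C$ solves the discrete wave equation in the cone $|j|+|k|<n$ with boundary conditions $(b_0;b_E,b_N,b_W,b_S)$ if: (0) $f(j,k,n)=0$ whenever $|j|+|k|\ge n$; (1) $f(0,0,1)=b_0$; (2) for each $n\ge1$: $f(-n,0,n+1)=\tfrac12(f(-n+1,0,n)+b_W)$, $f(0,n,n+1)=\tfrac12(f(0,n-1,n)+b_N)$, $f(0,-n,n+1)=\tfrac12(f(0,-n+1,n)+b_S)$, $f(n,0,n+1)=\tfrac12(f(n-1,0,n)+b_E)$; (3) for each $(j,k,n+1)\in\Lambda^+$ with $n\ge1$,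 $|j|+|k|\le n$, $\{|j|,|k|\}\ne\{0,n\}$, the discrete wave equation above holds for $f$. These conditions determine $f$ uniquely. *)

theory Defs
  imports Complex_Main
begin

definition in_Lambda :: "int \<Rightarrow> int \<Rightarrow> nat \<Rightarrow> bool" where
  "in_Lambda j k n \<longleftrightarrow> odd (j + k + int n)"

text \<open>Fundamental solution f_0.  Defined on all of int x int x nat by the
recurrence; only its values on Lambda+ matter (the recurrence at points of
Lambda+ only refers to points of Lambda+).\<close>
fun f0 :: "int \<Rightarrow> int \<Rightarrow> nat \<Rightarrow> real" where
  "f0 j k 0 = 0"
| "f0 j k (Suc 0) = (if j = 0 \<and> k = 0 then 1 else 0)"
| "f0 j k (Suc (Suc n)) =
     (f0 (j + 1) k (Suc n) + f0 (j - 1) k (Suc n) + f0 j (k + 1) (Suc n) + f0 j (k - 1) (Suc n)) / 2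
     - f0 j k n"

definition solves_cone ::
  "complex \<Rightarrow> complex \<Rightarrow> complex \<Rightarrow> complex \<Rightarrow> complex \<Rightarrow> (int \<Rightarrow> int \<Rightarrow> nat \<Rightarrow> complex) \<Rightarrow> bool" where
  "solves_cone b0 bE bN bW bS f \<longleftrightarrow>
     (\<forall>j k n. in_Lambda j k n \<and> \<bar>j\<bar> + \<bar>k\<bar> \<ge> int n \<longrightarrow> f j k n = 0) \<and>
     f 0 0 1 = b0 \<and>
     (\<forall>n::nat. n \<ge> 1 \<longrightarrow>
        f (- int n) 0 (n + 1) = (f (- int n + 1) 0 n + bW) / 2 \<and>
        f 0 (int n) (n + 1) = (f 0 (int n - 1) n + bN) / 2 \<and>
        f 0 (- int n) (n + 1) = (f 0 (- int n + 1) n + bS) / 2 \<and>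
        f (int n) 0 (n + 1) = (f (int n - 1) 0 n + bE) / 2) \<and>
     (\<forall>j k n. in_Lambda j k (n + 1) \<and> n \<ge> 1 \<and> \<bar>j\<bar> + \<bar>k\<bar> \<le> int n \<and>
        {\<bar>j\<bar>, \<bar>k\<bar>} \<noteq> {0, int n} \<longrightarrow>
        f j k (n + 1) + f j k (n - 1) =
          (f (j + 1) k n + f (j - 1) k n + f j (k + 1) n + f j (k - 1) n) / 2)"

end

theory Submission
  imports Defs
begin

text \<open>The cone problem has at most one solution, by induction on time: each new value is fixed
either by a boundary condition or by the wave equation in terms of the two previous time levels.
So it suffices to exhibit one solution. By Duhamel's principle, feeding a unit impulse into the
east corner at every time step gives the candidate
  f_E(j, k, n) = 1/2 * (sum over t < n of f_0(j - (n - t), k, t)).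
It satisfies the discrete wave equation everywhere except for a unit source at the east corner
points (n, 0, n + 1); since the other neighbours of those points lie outside the cone, this is
exactly the boundary condition with b_E = 1.\<close>

lemma
  assumes "solves_cone b0 bE bN bW bS f"
  shows solves_cone_outside: "in_Lambda j k n \<Longrightarrow> int n \<le> \<bar>j\<bar> + \<bar>k\<bar> \<Longrightarrow> f j k n = 0"
    and solves_cone_apex: "f 0 0 1 = b0"
    and solves_cone_boundary: "n \<ge> 1 \<Longrightarrow>
        f (- int n) 0 (n + 1) = (f (- int n + 1) 0 n + bW) / 2 \<and>
        f 0 (int n) (n + 1) = (f 0 (int n - 1) n + bN) / 2 \<and>
        f 0 (- int n) (n + 1) = (f 0 (- int n + 1) n + bS) / 2 \<and>
        f (int n) 0 (n + 1) = (f (int n - 1) 0 n + bE) / 2"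
    and solves_cone_wave: "in_Lambda j k (n + 1) \<Longrightarrow> n \<ge> 1 \<Longrightarrow> \<bar>j\<bar> + \<bar>k\<bar> \<le> int n \<Longrightarrow>
        {\<bar>j\<bar>, \<bar>k\<bar>} \<noteq> {0, int n} \<Longrightarrow>
        f j k (n + 1) + f j k (n - 1) =
          (f (j + 1) k n + f (j - 1) k n + f j (k + 1) n + f j (k - 1) n) / 2"
  using assms unfolding solves_cone_def by blast+

lemma solves_cone_boundary_point:
  assumes "m \<ge> 1" and "{\<bar>j\<bar>, \<bar>k\<bar>} = {0, int m}"
  obtains a b c where "in_Lambda a b m"
    and "\<And>f. solves_cone b0 bE bN bW bS f \<Longrightarrow> f j k (m + 1) = (f a b m + c) / 2"
proof -
  consider "j = int m" "k = 0" | "j = - int m" "k = 0" | "j = 0" "k = int m" | "j = 0" "k = - int m"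
    using assms by (auto simp: doubleton_eq_iff abs_if split: if_splits)
  then show ?thesis
  proof cases
    case 1
    show ?thesis
      by (rule that[of "int m - 1" 0 bE]) (auto simp: 1 in_Lambda_def dest: solves_cone_boundary[OF _ assms(1)])
  next
    case 2
    show ?thesis
      by (rule that[of "- int m + 1" 0 bW]) (auto simp: 2 in_Lambda_def dest: solves_cone_boundary[OF _ assms(1)])
  next
    case 3
    show ?thesis
      by (rule that[of 0 "int m - 1" bN]) (auto simp: 3 in_Lambda_def dest: solves_cone_boundary[OF _ assms(1)])
  next
    case 4
    show ?thesis
      by (rule that[of 0 "- int m + 1" bS]) (auto simp: 4 in_Lambda_def dest: solves_cone_boundary[OF _ assms(1)])
  qed
qed

lemma solves_cone_unique:
  assumes f: "solves_cone b0 bE bN bW bS f" and g: "solves_cone b0 bE bN bW bS g"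
    and "in_Lambda j k n"
  shows "f j k n = g j k n"
  using assms(3)
proof (induction n arbitrary: j k rule: less_induct)
  case (less n)
  show ?case
  proof (cases "int n \<le> \<bar>j\<bar> + \<bar>k\<bar>")
    case True
    then show ?thesis using solves_cone_outside[OF f] solves_cone_outside[OF g] less.prems by simp
  next
    case inside: False
    then obtain m where n: "n = Suc m" by (cases n) auto
    show ?thesis
    proof (cases "m = 0")
      case True
      then have "j = 0" "k = 0" using inside n by auto
      then show ?thesis using solves_cone_apex[OF f] solves_cone_apex[OF g] n True by simp
    next
      case m_pos: False
      show ?thesis
      proof (cases "{\<bar>j\<bar>, \<bar>k\<bar>} = {0, int m}")
        case True
        obtain a b c where "in_Lambda a b m"
          and step: "\<And>h. solves_cone b0 bE bN bW bS h \<Longrightarrow> h j k (m + 1) = (h a b m + c) / 2"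
          by (rule solves_cone_boundary_point[of m j k b0 bE bN bW bS])
            (use m_pos True in auto)
        then have "f a b m = g a b m" using less.IH n by blast
        then show ?thesis unfolding n Suc_eq_plus1 step[OF f] step[OF g] by simp
      next
        case False
        have odd: "odd (j + k + int m + 1)" using less.prems n by (simp add: in_Lambda_def add.assoc)
        have "in_Lambda (j + 1) k m" "in_Lambda (j - 1) k m" "in_Lambda j (k + 1) m"
          "in_Lambda j (k - 1) m" "in_Lambda j k (m - 1)"
          using odd m_pos by (simp_all add: in_Lambda_def of_nat_diff) presburger+
        then have nbrs: "f (j + 1) k m = g (j + 1) k m" "f (j - 1) k m = g (j - 1) k m"
          "f j (k + 1) m = g j (k + 1) m" "f j (k - 1) m = g j (k - 1) m"
          "f j k (m - 1) = g j k (m - 1)"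
          using less.IH n by auto
        have "m \<ge> 1" "\<bar>j\<bar> + \<bar>k\<bar> \<le> int m" using m_pos inside n by simp_all
        note wave_conds = less.prems[unfolded n Suc_eq_plus1] this False
        have "f j k (m + 1) + f j k (m - 1) = g j k (m + 1) + g j k (m - 1)"
          using solves_cone_wave[OF f wave_conds] solves_cone_wave[OF g wave_conds] by (simp only: nbrs)
        then show ?thesis using nbrs n by simp
      qed
    qed
  qed
qed

lemma f0_eq_0_outside_cone: "int n \<le> \<bar>j\<bar> + \<bar>k\<bar> \<Longrightarrow> f0 j k n = 0"
proof (induction j k n rule: f0.induct)
  case (3 j k n)
  have "f0 (j + 1) k (Suc n) = 0" "f0 (j - 1) k (Suc n) = 0"
    "f0 j (k + 1) (Suc n) = 0" "f0 j (k - 1) (Suc n) = 0" "f0 j k n = 0"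
    by (rule "3.IH"; use "3.prems" in auto)+
  then show ?case by simp
qed auto

definition duhamel_east :: "int \<Rightarrow> int \<Rightarrow> nat \<Rightarrow> real" where
  "duhamel_east j k n = (\<Sum>t<n. f0 (j - int n + int t) k t)"

lemma duhamel_east_eq_0_outside_cone: "int n \<le> \<bar>j\<bar> + \<bar>k\<bar> \<Longrightarrow> duhamel_east j k n = 0"
  unfolding duhamel_east_def by (intro sum.neutral ballI f0_eq_0_outside_cone) auto

lemma duhamel_east_Suc: "duhamel_east j k (Suc n) = (\<Sum>t<n. f0 (j - int n + int t) k (Suc t))"
  unfolding duhamel_east_def sum.lessThan_Suc_shift by (simp add: algebra_simps)

lemma duhamel_east_wave_eq:
  "duhamel_east j k (Suc (Suc m)) + duhamel_east j k m =
     (duhamel_east (j + 1) k (Suc m) + duhamel_east (j - 1) k (Suc m)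
      + duhamel_east j (k + 1) (Suc m) + duhamel_east j (k - 1) (Suc m)) / 2
     + (if j = int (Suc m) \<and> k = 0 then 1 else 0)"
proof -
  have f0_wave: "f0 (j - int m + int t) k (Suc (Suc t)) =
      (f0 (j + 1 - int m + int t) k (Suc t) + f0 (j - 1 - int m + int t) k (Suc t)
       + f0 (j - int m + int t) (k + 1) (Suc t) + f0 (j - int m + int t) (k - 1) (Suc t)) / 2
      - f0 (j - int m + int t) k t" for t
    by (simp add: algebra_simps)
  have "duhamel_east j k (Suc (Suc m)) =
      f0 (j - int (Suc m)) k 1 + (\<Sum>t<m. f0 (j - int m + int t) k (Suc (Suc t)))"
    unfolding duhamel_east_Suc sum.lessThan_Suc_shift by (simp add: algebra_simps del: f0.simps)
  \<comment> \<open>the impulse emitted last, \<open>f0 (j - int (Suc m)) k 1\<close>, is the source term\<close>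
  also have "\<dots> = (if j = int (Suc m) \<and> k = 0 then 1 else 0)
      + (duhamel_east (j + 1) k (Suc m) + duhamel_east (j - 1) k (Suc m)
         + duhamel_east j (k + 1) (Suc m) + duhamel_east j (k - 1) (Suc m)) / 2
      - duhamel_east j k m"
    unfolding f0_wave duhamel_east_Suc
    by (simp add: duhamel_east_def sum.distrib sum_subtractf sum_divide_distrib[symmetric])
  finally show ?thesis by simp
qed

lemma duhamel_east_boundary:
  assumes "n \<ge> 1"
  shows "duhamel_east (int n) 0 (n + 1) = duhamel_east (int n - 1) 0 n / 2 + 1"
    and "duhamel_east (- int n) 0 (n + 1) = duhamel_east (- int n + 1) 0 n / 2"
    and "duhamel_east 0 (int n) (n + 1) = duhamel_east 0 (int n - 1) n / 2"
    and "duhamel_east 0 (- int n) (n + 1) = duhamel_east 0 (- int n + 1) n / 2"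
proof -
  obtain m where n: "n = Suc m" using assms by (cases n) auto
  note wave = duhamel_east_wave_eq[of _ _ m, folded n]
  note zero = duhamel_east_eq_0_outside_cone
  show "duhamel_east (int n) 0 (n + 1) = duhamel_east (int n - 1) 0 n / 2 + 1"
    using wave[of "int n" 0] by (simp add: n zero)
  show "duhamel_east (- int n) 0 (n + 1) = duhamel_east (- int n + 1) 0 n / 2"
    using wave[of "- int n" 0] by (simp add: n zero)
  show "duhamel_east 0 (int n) (n + 1) = duhamel_east 0 (int n - 1) n / 2"
    using wave[of 0 "int n"] by (simp add: n zero)
  show "duhamel_east 0 (- int n) (n + 1) = duhamel_east 0 (- int n + 1) n / 2"
    using wave[of 0 "- int n"] by (simp add: n zero)
qed

lemma duhamel_east_solves_cone:
  "solves_cone 0 1 0 0 0 (\<lambda>j k n. complex_of_real (duhamel_east j k n) / 2)"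
  unfolding solves_cone_def
proof (intro conjI allI impI)
  show "complex_of_real (duhamel_east j k n) / 2 = 0" if "in_Lambda j k n \<and> int n \<le> \<bar>j\<bar> + \<bar>k\<bar>" for j k n
    using that by (simp add: duhamel_east_eq_0_outside_cone)
  show "complex_of_real (duhamel_east 0 0 1) / 2 = 0"
    by (simp add: duhamel_east_def)
next
  fix n :: nat
  assume "n \<ge> 1"
  note boundary = duhamel_east_boundary[OF this]
  show "complex_of_real (duhamel_east (- int n) 0 (n + 1)) / 2
      = (complex_of_real (duhamel_east (- int n + 1) 0 n) / 2 + 0) / 2"
    "complex_of_real (duhamel_east 0 (int n) (n + 1)) / 2
      = (complex_of_real (duhamel_east 0 (int n - 1) n) / 2 + 0) / 2"
    "complex_of_real (duhamel_east 0 (- int n) (n + 1)) / 2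
      = (complex_of_real (duhamel_east 0 (- int n + 1) n) / 2 + 0) / 2"
    "complex_of_real (duhamel_east (int n) 0 (n + 1)) / 2
      = (complex_of_real (duhamel_east (int n - 1) 0 n) / 2 + 1) / 2"
    unfolding boundary by simp_all
next
  fix j k n
  assume interior: "in_Lambda j k (n + 1) \<and> 1 \<le> n \<and> \<bar>j\<bar> + \<bar>k\<bar> \<le> int n \<and> {\<bar>j\<bar>, \<bar>k\<bar>} \<noteq> {0, int n}"
  then obtain m where n: "n = Suc m" by (cases n) auto
  from interior have not_east: "\<not> (j = int n \<and> k = 0)" by auto
  have "duhamel_east j k (n + 1) + duhamel_east j k (n - 1) =
      (duhamel_east (j + 1) k n + duhamel_east (j - 1) k n
       + duhamel_east j (k + 1) n + duhamel_east j (k - 1) n) / 2"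
    using duhamel_east_wave_eq[of j k m, unfolded if_not_P[OF not_east[unfolded n]]] by (simp add: n)
  from arg_cong[where f = "\<lambda>x. complex_of_real (x / 2)", OF this]
  show "complex_of_real (duhamel_east j k (n + 1)) / 2 + complex_of_real (duhamel_east j k (n - 1)) / 2 =
      (complex_of_real (duhamel_east (j + 1) k n) / 2 + complex_of_real (duhamel_east (j - 1) k n) / 2
       + complex_of_real (duhamel_east j (k + 1) n) / 2 + complex_of_real (duhamel_east j (k - 1) n) / 2) / 2"
    by (simp add: add_divide_distrib)
qed

lemma duhamel_east_eq_sum:
  "duhamel_east j k n = (\<Sum>s = 1..n - 1. f0 (j - int s) k (n - s))"
proof -
  have "duhamel_east j k n = (\<Sum>t = 1..<n. f0 (j - int n + int t) k t)"
    unfolding duhamel_east_def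
    by (cases n) (auto simp: sum.atLeast_Suc_lessThan atLeast0LessThan[symmetric])
  also have "\<dots> = (\<Sum>s = 1..n - 1. f0 (j - int s) k (n - s))"
    by (rule sum.reindex_bij_witness[of _ "\<lambda>s. n - s" "\<lambda>t. n - t"]) (auto simp: algebra_simps)
  finally show ?thesis .
qed

theorem mainTheorem5:
  fixes fE :: "int \<Rightarrow> int \<Rightarrow> nat \<Rightarrow> complex"
  assumes "solves_cone 0 1 0 0 0 fE"
  shows "\<forall>j k n. in_Lambda j k n \<and> n \<ge> 1 \<longrightarrow>
           fE j k n = (\<Sum>s = 1..n - 1. complex_of_real (f0 (j - int s) k (n - s))) / 2"
proof (intro allI impI)
  fix j k n
  assume "in_Lambda j k n \<and> n \<ge> 1"
  then have "fE j k n = complex_of_real (duhamel_east j k n) / 2"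
    using solves_cone_unique[OF assms duhamel_east_solves_cone] by simp
  then show "fE j k n = (\<Sum>s = 1..n - 1. complex_of_real (f0 (j - int s) k (n - s))) / 2"
    by (simp add: duhamel_east_eq_sum)
qed

end
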